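(* For every Keedwell Sudoku board $B$ and every $g\in G_k$, the board $g\cdot B$ is Keedwell and has the same linearity degree as $B$.
   Context: A Sudoku board is a $9\times 9$ array with entries from $\{0,\dots,8\}$ such that every row, column and each of the nine $3\times 3$ blocks (subsquares) contains each symbol once; the subsquare in block-row $i$ and block-column $j$ ($i,j\in\{0,1,2\}$) is the $(i,j)$th subsquare. The full Sudoku symmetry group is $G_9=H_9\times S_9$, where $H_9$ is the group of cell rearrangements generated by permutations of the three bands (horizontal strips of blocks), permutations of the rows within a band, permutations of the three pillars (vertical strips of blocks), permutations of the columns within a pillar, and the transpose, and $S_9$ is the group of all relabelings (permutations of the symbols applied to every entry). For a $3\times 3$ array, let $\alpha$ cycle its rows down by one and $\beta$ cycle its columns right by one; both have order $3$. A Sudoku board $B$ with upper-left subsquare $K$ is Keedwell if there are exponents $c_{ij},d_{ij}\in\mathbb{Z}/3\mathbb{Z}$ ($i,j\in\{0,1,2\}$) with $c_{00}=d_{00}=0$ such that the $(i,j)$th subsquare of $B$ is $\alpha^{c_{ij}}\beta^{d_{ij}}K$; since $K$ has nine distinct entries, these exponent matrices $\{c_{ij}\}$, $\{d_{ij}\}$ are uniquely determined by $B$. A matrix $\{m_{ij}\}_{i,j\in\{0,1,2\}}$ over $\mathbb{Z}/3\mathbb{Z}$ is quasi-linear if $m_{ij}=m_{i0}+m_{0j}$ for all $i,j$. The linearity degree of a Keedwell board is the number (0, 1 or 2) of its two exponent matrices $\{c_{ij}\}$, $\{d_{ij}\}$ that are quasi-linear. $G_k$ is the set of all $g\in G_9$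 that map the set of Keedwell boards to itself. *)

theory Defs
  imports "HOL-Combinatorics.Permutations"
begin

text \<open>Boards: functions nat => nat => nat; cell (i,j) with i,j < 9 holds a symbol < 9,
  cells outside the grid are 0 (extensional convention).\<close>
type_synonym board = "nat \<Rightarrow> nat \<Rightarrow> nat"
type_synonym cellperm = "nat \<times> nat \<Rightarrow> nat \<times> nat"

definition sudoku :: "board \<Rightarrow> bool" where
  "sudoku B \<longleftrightarrow>
     (\<forall>i j. \<not> (i < 9 \<and> j < 9) \<longrightarrow> B i j = 0) \<and>
     (\<forall>i<9. bij_betw (\<lambda>j. B i j) {..<9} {..<9}) \<and>
     (\<forall>j<9. bij_betw (\<lambda>i. B i j) {..<9} {..<9}) \<and>
     (\<forall>a<3. \<forall>b<3. bij_betw (\<lambda>(r, s). B (3*a + r) (3*b + s)) ({..<3} \<times> {..<3}) {..<9})"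

definition band_perm :: "(nat \<Rightarrow> nat) \<Rightarrow> cellperm" where
  "band_perm \<sigma> = (\<lambda>(i, j). if i < 9 \<and> j < 9 then (3 * \<sigma> (i div 3) + i mod 3, j) else (i, j))"

definition row_perm :: "nat \<Rightarrow> (nat \<Rightarrow> nat) \<Rightarrow> cellperm" where
  "row_perm b \<sigma> = (\<lambda>(i, j). if i < 9 \<and> j < 9 \<and> i div 3 = b then (3 * b + \<sigma> (i mod 3), j) else (i, j))"

definition pillar_perm :: "(nat \<Rightarrow> nat) \<Rightarrow> cellperm" where
  "pillar_perm \<sigma> = (\<lambda>(i, j). if i < 9 \<and> j < 9 then (i, 3 * \<sigma> (j div 3) + j mod 3) else (i, j))"

definition col_perm :: "nat \<Rightarrow> (nat \<Rightarrow> nat) \<Rightarrow> cellperm" where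
  "col_perm b \<sigma> = (\<lambda>(i, j). if i < 9 \<and> j < 9 \<and> j div 3 = b then (i, 3 * b + \<sigma> (j mod 3)) else (i, j))"

definition transp :: cellperm where
  "transp = (\<lambda>(i, j). (j, i))"

inductive H9_gen :: "cellperm \<Rightarrow> bool" where
  band: "\<sigma> permutes {..<3} \<Longrightarrow> H9_gen (band_perm \<sigma>)"
| row: "b < 3 \<Longrightarrow> \<sigma> permutes {..<3} \<Longrightarrow> H9_gen (row_perm b \<sigma>)"
| pillar: "\<sigma> permutes {..<3} \<Longrightarrow> H9_gen (pillar_perm \<sigma>)"
| col: "b < 3 \<Longrightarrow> \<sigma> permutes {..<3} \<Longrightarrow> H9_gen (col_perm b \<sigma>)"
| tr: "H9_gen transp"

text \<open>The group generated (the generator set is closed under inverses and the group is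
  finite, so closure under composition gives the generated group).\<close>
inductive_set H9 :: "cellperm set" where
  ident: "id \<in> H9"
| comp: "H9_gen p \<Longrightarrow> q \<in> H9 \<Longrightarrow> p \<circ> q \<in> H9"

definition G9 :: "(cellperm \<times> (nat \<Rightarrow> nat)) set" where
  "G9 = {(p, \<sigma>). p \<in> H9 \<and> \<sigma> permutes {..<9}}"

definition act :: "cellperm \<times> (nat \<Rightarrow> nat) \<Rightarrow> board \<Rightarrow> board" where
  "act g B = (\<lambda>i j. if i < 9 \<and> j < 9
                     then snd g (B (fst (fst g (i, j))) (snd (fst g (i, j)))) else 0)"

text \<open>3x3 arrays: alpha cycles rows down by one, beta cycles columns right by one.\<close>
definition alpha :: "board \<Rightarrow> board" where
  "alpha K = (\<lambda>r s. K ((r + 2) mod 3) s)"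

definition beta :: "board \<Rightarrow> board" where
  "beta K = (\<lambda>r s. K r ((s + 2) mod 3))"

definition keedwell_exps :: "board \<Rightarrow> (nat \<Rightarrow> nat \<Rightarrow> nat) \<Rightarrow> (nat \<Rightarrow> nat \<Rightarrow> nat) \<Rightarrow> bool" where
  "keedwell_exps B c d \<longleftrightarrow>
     c 0 0 = 0 \<and> d 0 0 = 0 \<and> (\<forall>i<3. \<forall>j<3. c i j < 3 \<and> d i j < 3) \<and>
     (\<forall>i<3. \<forall>j<3. \<forall>r<3. \<forall>s<3.
        B (3*i + r) (3*j + s) = ((alpha ^^ c i j) ((beta ^^ d i j) (\<lambda>r s. B r s))) r s)"

definition keedwell :: "board \<Rightarrow> bool" where
  "keedwell B \<longleftrightarrow> sudoku B \<and> (\<exists>c d. keedwell_exps B c d)"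

definition quasi_linear :: "(nat \<Rightarrow> nat \<Rightarrow> nat) \<Rightarrow> bool" where
  "quasi_linear m \<longleftrightarrow> (\<forall>i<3. \<forall>j<3. m i j mod 3 = (m i 0 + m 0 j) mod 3)"

definition lin_deg :: "(nat \<Rightarrow> nat \<Rightarrow> nat) \<Rightarrow> (nat \<Rightarrow> nat \<Rightarrow> nat) \<Rightarrow> nat" where
  "lin_deg c d = (if quasi_linear c then 1 else 0) + (if quasi_linear d then 1 else 0)"

definition linearity_degree :: "board \<Rightarrow> nat" where
  "linearity_degree B = (THE n. \<exists>c d. keedwell_exps B c d \<and> n = lin_deg c d)"

definition Gk :: "(cellperm \<times> (nat \<Rightarrow> nat)) set" where
  "Gk = {g \<in> G9. \<forall>B. keedwell B \<longrightarrow> keedwell (act g B)}"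

end

theory Submission
  imports Defs
begin

text \<open>Whether the rows of one band can be matched with those of another band so that matched
  rows carry the same three symbols in every pillar is a property of the board alone. It
  survives relabelling and all permutations of bands, pillars, and rows or columns inside them,
  and the transpose exchanges it with the same property for columns; so the number of these two
  properties that hold is a G9-invariant. On a Keedwell board, row r of subsquare (i,j) is row
  r - c_ij of K, and distinct rows of K have disjoint symbol sets. Hence bands i and l match
  exactly when c_ij - c_lj does not depend on j, which is quasi-linearity of c; likewise for
  columns and d. So the invariant is the linearity degree.\<close>

definition minirow :: "board \<Rightarrow> nat \<Rightarrow> nat \<Rightarrow> nat \<Rightarrow> nat set" where
  "minirow B i r j = (\<lambda>s. B (3 * i + r) (3 * j + s)) ` {..<3}"

definition rows_aligned :: "board \<Rightarrow> bool" where
  "rows_aligned B \<longleftrightarrow> (\<forall>i<3. \<forall>l<3. \<forall>r<3. \<exists>t<3. \<forall>j<3. minirow B i r j = minirow B l t j)"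

definition board_transpose :: "board \<Rightarrow> board" where
  "board_transpose B = (\<lambda>i j. B j i)"

definition alignment_degree :: "board \<Rightarrow> nat" where
  "alignment_degree B =
     (if rows_aligned B then 1 else 0) + (if rows_aligned (board_transpose B) then 1 else 0)"

lemma nat_mod_eq_iff_int_dvd: "(a::nat) mod n = b mod n \<longleftrightarrow> int n dvd int a - int b"
  by (metis of_nat_eq_iff of_nat_mod mod_eq_dvd_iff)

lemma add_mod_image_lessThan:
  assumes "0 < n"
  shows "(\<lambda>s. (s + m) mod n) ` {..<n} = {..<(n::nat)}"
proof (rule endo_inj_surj)
  show "inj_on (\<lambda>s. (s + m) mod n) {..<n}"
  proof (rule inj_onI)
    fix a b assume "a \<in> {..<n}" "b \<in> {..<n}" "(a + m) mod n = (b + m) mod n"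
    then have "a mod n = b mod n" unfolding nat_mod_eq_iff_int_dvd by simp
    with \<open>a \<in> {..<n}\<close> \<open>b \<in> {..<n}\<close> show "a = b" by simp
  qed
qed (use assms in auto)

text \<open>(f, g) is the element of the wreath product of S3 by S3 that sends 3i + r to
  3 f(i) + g_i(r): it permutes three blocks of three indices and, independently, the indices
  inside each block.\<close>

definition wreath_pair :: "(nat \<Rightarrow> nat) \<Rightarrow> (nat \<Rightarrow> nat \<Rightarrow> nat) \<Rightarrow> bool" where
  "wreath_pair f g \<longleftrightarrow> f permutes {..<3} \<and> (\<forall>i<3. g i permutes {..<3})"

definition wreath_perm :: "(nat \<Rightarrow> nat) \<Rightarrow> (nat \<Rightarrow> nat \<Rightarrow> nat) \<Rightarrow> nat \<Rightarrow> nat" where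
  "wreath_perm f g x = 3 * f (x div 3) + g (x div 3) (x mod 3)"

lemma wreath_perm_block [simp]: "r < 3 \<Longrightarrow> wreath_perm f g (3 * i + r) = 3 * f i + g i r"
  by (simp add: wreath_perm_def)

lemma wreath_perm_id [simp]: "wreath_perm id (\<lambda>_. id) x = x"
  by (simp add: wreath_perm_def)

lemma wreath_pair_id [simp]: "wreath_pair id (\<lambda>_. id)"
  by (simp add: wreath_pair_def)

lemma wreath_pair_less:
  assumes "wreath_pair f g" "i < 3"
  shows "f i < 3" and "r < 3 \<Longrightarrow> g i r < 3"
  using assms permutes_in_image unfolding wreath_pair_def by fastforce+

lemma wreath_perm_less:
  assumes "wreath_pair f g" "x < 9"
  shows "wreath_perm f g x < 9"
proof -
  have "f (x div 3) < 3" "g (x div 3) (x mod 3) < 3"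
    using wreath_pair_less[OF assms(1), of "x div 3"] assms(2) by auto
  then show ?thesis unfolding wreath_perm_def by linarith
qed

lemma wreath_pair_inv:
  assumes "wreath_pair f g"
  shows "wreath_pair (inv f) (\<lambda>i. inv (g (inv f i)))"
  unfolding wreath_pair_def
proof (intro conjI allI impI)
  have f: "f permutes {..<3}" using assms unfolding wreath_pair_def by simp
  then show "inv f permutes {..<3}" by (rule permutes_inv)
  fix i :: nat assume "i < 3"
  then have "inv f i < 3" using permutes_in_image[OF permutes_inv[OF f]] by simp
  then show "inv (g (inv f i)) permutes {..<3}"
    using assms permutes_inv unfolding wreath_pair_def by blast
qed

lemma wreath_perm_inv:
  assumes "wreath_pair f g" "x < 9"
  shows "wreath_perm f g (wreath_perm (inv f) (\<lambda>i. inv (g (inv f i))) x) = x"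
proof -
  let ?i = "inv f (x div 3)" and ?r = "inv (g (inv f (x div 3))) (x mod 3)"
  have "?i < 3" "?r < 3"
    using wreath_pair_less[OF wreath_pair_inv[OF assms(1)], of "x div 3"] assms(2)
    by auto
  moreover have "f ?i = x div 3" "g ?i ?r = x mod 3"
    using assms(1) \<open>?i < 3\<close> unfolding wreath_pair_def by (auto simp: permutes_inverses)
  ultimately show ?thesis by (simp add: wreath_perm_def)
qed

lemma rows_aligned_wreath_perm_imp:
  assumes fg: "wreath_pair f g" and hk: "wreath_pair h k"
    and wreath_permd: "\<forall>x<9. \<forall>y<9. B' x y = B (wreath_perm f g x) (wreath_perm h k y)"
    and "rows_aligned B"
  shows "rows_aligned B'"
proof -
  have minirow: "minirow B' i r j = minirow B (f i) (g i r) (h j)" if "i < 3" "r < 3" "j < 3" for i r j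
  proof -
    have "B' (3 * i + r) (3 * j + s) = B (3 * f i + g i r) (3 * h j + k j s)" if "s < 3" for s
      using wreath_permd[rule_format, of "3 * i + r" "3 * j + s"] \<open>i < 3\<close> \<open>r < 3\<close> \<open>j < 3\<close> that
      by simp
    then have "minirow B' i r j = (\<lambda>s. B (3 * f i + g i r) (3 * h j + s)) ` k j ` {..<3}"
      unfolding minirow_def image_image by (intro image_cong) auto
    also have "k j ` {..<3} = {..<3}"
      using hk that unfolding wreath_pair_def by (simp add: permutes_image)
    finally show ?thesis unfolding minirow_def .
  qed
  show ?thesis unfolding rows_aligned_def
  proof (intro allI impI)
    fix i l r :: nat assume "i < 3" "l < 3" "r < 3"
    then have "f i < 3" "f l < 3" "g i r < 3" using wreath_pair_less[OF fg] by auto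
    then obtain t where "t < 3" and t: "\<forall>j<3. minirow B (f i) (g i r) j = minirow B (f l) t j"
      using \<open>rows_aligned B\<close> unfolding rows_aligned_def by blast
    have gl: "g l permutes {..<3}" using fg \<open>l < 3\<close> unfolding wreath_pair_def by simp
    define t' where "t' = inv (g l) t"
    have "t' < 3" "g l t' = t"
      unfolding t'_def using \<open>t < 3\<close> permutes_in_image[OF permutes_inv[OF gl]]
      by (simp_all add: permutes_inverses[OF gl])
    have "minirow B' i r j = minirow B' l t' j" if "j < 3" for j
      using minirow t \<open>i < 3\<close> \<open>l < 3\<close> \<open>r < 3\<close> \<open>t' < 3\<close> \<open>g l t' = t\<close> that
        wreath_pair_less[OF hk] by simp
    with \<open>t' < 3\<close> show "\<exists>t<3. \<forall>j<3. minirow B' i r j = minirow B' l t j" by blast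
  qed
qed

lemma rows_aligned_wreath_perm:
  assumes fg: "wreath_pair f g" and hk: "wreath_pair h k"
    and wreath_permd: "\<forall>x<9. \<forall>y<9. B' x y = B (wreath_perm f g x) (wreath_perm h k y)"
  shows "rows_aligned B' \<longleftrightarrow> rows_aligned B"
proof
  show "rows_aligned B' \<Longrightarrow> rows_aligned B"
  proof (rule rows_aligned_wreath_perm_imp[OF wreath_pair_inv[OF fg] wreath_pair_inv[OF hk]])
    show "\<forall>x<9. \<forall>y<9. B x y =
      B' (wreath_perm (inv f) (\<lambda>i. inv (g (inv f i))) x) (wreath_perm (inv h) (\<lambda>j. inv (k (inv h j))) y)"
      using wreath_permd wreath_perm_less[OF wreath_pair_inv] wreath_perm_inv fg hk by simp
  qed
qed (rule rows_aligned_wreath_perm_imp[OF fg hk wreath_permd])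

lemma alignment_degree_wreath_perm:
  assumes "wreath_pair f g" "wreath_pair h k"
    and "\<forall>x<9. \<forall>y<9. B' x y = B (wreath_perm f g x) (wreath_perm h k y)"
  shows "alignment_degree B' = alignment_degree B"
proof -
  have "\<forall>x<9. \<forall>y<9. board_transpose B' x y = board_transpose B (wreath_perm h k x) (wreath_perm f g y)"
    using assms(3) by (simp add: board_transpose_def)
  from rows_aligned_wreath_perm[OF assms(2,1) this] show ?thesis
    using rows_aligned_wreath_perm[OF assms]
    unfolding alignment_degree_def by simp
qed

lemma rows_aligned_cong:
  assumes "\<forall>x<9. \<forall>y<9. B' x y = B x y"
  shows "rows_aligned B' \<longleftrightarrow> rows_aligned B"
  using rows_aligned_wreath_perm[OF wreath_pair_id wreath_pair_id] assms by simp

definition relabel :: "(nat \<Rightarrow> nat) \<Rightarrow> board \<Rightarrow> board" where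
  "relabel \<sigma> B = (\<lambda>i j. if i < 9 \<and> j < 9 then \<sigma> (B i j) else 0)"

lemma rows_aligned_relabel:
  assumes "inj \<sigma>"
  shows "rows_aligned (relabel \<sigma> B) \<longleftrightarrow> rows_aligned B"
proof -
  have "minirow (relabel \<sigma> B) i r j = \<sigma> ` minirow B i r j" if "i < 3" "r < 3" "j < 3" for i r j
    unfolding minirow_def relabel_def image_image using that by (intro image_cong) auto
  then show ?thesis
    unfolding rows_aligned_def by (simp add: inj_image_eq_iff[OF assms] cong: conj_cong)
qed

lemma alignment_degree_relabel:
  assumes "inj \<sigma>"
  shows "alignment_degree (relabel \<sigma> B) = alignment_degree B"
proof -
  have "board_transpose (relabel \<sigma> B) = relabel \<sigma> (board_transpose B)"
    by (auto simp: board_transpose_def relabel_def fun_eq_iff)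
  then show ?thesis unfolding alignment_degree_def by (simp add: rows_aligned_relabel[OF assms])
qed

lemma alignment_degree_transposed:
  assumes "\<forall>x<9. \<forall>y<9. B' x y = B y x"
  shows "alignment_degree B' = alignment_degree B"
proof -
  have "rows_aligned B' \<longleftrightarrow> rows_aligned (board_transpose B)"
    "rows_aligned (board_transpose B') \<longleftrightarrow> rows_aligned B"
    using assms by (simp_all add: rows_aligned_cong board_transpose_def)
  then show ?thesis unfolding alignment_degree_def by simp
qed

definition rearrange :: "cellperm \<Rightarrow> board \<Rightarrow> board" where
  "rearrange p B = (\<lambda>i j. if i < 9 \<and> j < 9 then B (fst (p (i, j))) (snd (p (i, j))) else 0)"

definition maps_grid :: "cellperm \<Rightarrow> bool" where
  "maps_grid p \<longleftrightarrow> (\<forall>i<9. \<forall>j<9. fst (p (i, j)) < 9 \<and> snd (p (i, j)) < 9)"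

lemma act_eq_relabel_rearrange: "act (p, \<sigma>) B = relabel \<sigma> (rearrange p B)"
  by (simp add: fun_eq_iff act_def relabel_def rearrange_def)

lemma rearrange_comp:
  assumes "maps_grid q"
  shows "rearrange (p \<circ> q) B = rearrange q (rearrange p B)"
  using assms by (auto simp: rearrange_def maps_grid_def fun_eq_iff)

definition preserves_alignment :: "cellperm \<Rightarrow> bool" where
  "preserves_alignment p \<longleftrightarrow>
     maps_grid p \<and> (\<forall>B. alignment_degree (rearrange p B) = alignment_degree B)"

lemma preserves_alignment_wreath_perm:
  assumes "wreath_pair f g" "wreath_pair h k"
    and "\<forall>x<9. \<forall>y<9. p (x, y) = (wreath_perm f g x, wreath_perm h k y)"
  shows "preserves_alignment p"
  unfolding preserves_alignment_def maps_grid_def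
  using assms wreath_perm_less[OF assms(1)] wreath_perm_less[OF assms(2)]
  by (auto intro!: alignment_degree_wreath_perm[OF assms(1,2)] simp: rearrange_def)

lemma maps_grid_comp:
  assumes "maps_grid p" "maps_grid q"
  shows "maps_grid (p \<circ> q)"
  unfolding maps_grid_def
proof (intro allI impI)
  fix i j :: nat assume "i < 9" "j < 9"
  with \<open>maps_grid q\<close> have "fst (q (i, j)) < 9" "snd (q (i, j)) < 9" by (simp_all add: maps_grid_def)
  with \<open>maps_grid p\<close> show "fst ((p \<circ> q) (i, j)) < 9 \<and> snd ((p \<circ> q) (i, j)) < 9"
    unfolding maps_grid_def by (metis comp_apply prod.collapse)
qed

lemma preserves_alignment_comp:
  assumes "preserves_alignment p" "preserves_alignment q"
  shows "preserves_alignment (p \<circ> q)"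
  using assms maps_grid_comp rearrange_comp unfolding preserves_alignment_def by simp

lemma preserves_alignment_transp: "preserves_alignment transp"
  unfolding preserves_alignment_def maps_grid_def
  by (auto intro!: alignment_degree_transposed simp: rearrange_def transp_def)

lemma preserves_alignment_generator:
  assumes "H9_gen p"
  shows "preserves_alignment p"
  using assms
proof induction
  case (band \<sigma>)
  then have "wreath_pair \<sigma> (\<lambda>_. id)" by (simp add: wreath_pair_def)
  then show ?case
    by (rule preserves_alignment_wreath_perm[OF _ wreath_pair_id]) (simp add: band_perm_def wreath_perm_def)
next
  case (row b \<sigma>)
  then have "wreath_pair id (\<lambda>i. if i = b then \<sigma> else id)" by (simp add: wreath_pair_def)
  then show ?case
    by (rule preserves_alignment_wreath_perm[OF _ wreath_pair_id]) (simp add: row_perm_def wreath_perm_def)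
next
  case (pillar \<sigma>)
  then have "wreath_pair \<sigma> (\<lambda>_. id)" by (simp add: wreath_pair_def)
  then show ?case
    by (rule preserves_alignment_wreath_perm[OF wreath_pair_id]) (simp add: pillar_perm_def wreath_perm_def)
next
  case (col b \<sigma>)
  then have "wreath_pair id (\<lambda>i. if i = b then \<sigma> else id)" by (simp add: wreath_pair_def)
  then show ?case
    by (rule preserves_alignment_wreath_perm[OF wreath_pair_id]) (simp add: col_perm_def wreath_perm_def)
next
  case tr
  show ?case by (rule preserves_alignment_transp)
qed

lemma preserves_alignment_H9:
  assumes "p \<in> H9"
  shows "preserves_alignment p"
  using assms
proof induction
  case ident
  show ?case by (rule preserves_alignment_wreath_perm[OF wreath_pair_id wreath_pair_id]) simp
next
  case (comp p q)
  then show ?case by (blast intro: preserves_alignment_comp preserves_alignment_generator)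
qed

lemma alignment_degree_act:
  assumes "g \<in> G9"
  shows "alignment_degree (act g B) = alignment_degree B"
proof -
  obtain p \<sigma> where g: "g = (p, \<sigma>)" and "p \<in> H9" and "\<sigma> permutes {..<9}"
    using assms unfolding G9_def by auto
  then have "inj \<sigma>" and "preserves_alignment p"
    by (simp_all add: permutes_inj preserves_alignment_H9)
  then show ?thesis
    unfolding g act_eq_relabel_rearrange preserves_alignment_def
    by (simp add: alignment_degree_relabel)
qed

text \<open>In natural numbers, r + 2n stands for r - n modulo 3.\<close>

lemma alpha_pow_apply: "r < 3 \<Longrightarrow> (alpha ^^ n) K r s = K ((r + 2 * n) mod 3) s"
proof (induction n arbitrary: r)
  case (Suc n)
  have "(alpha ^^ Suc n) K r s = (alpha ^^ n) K ((r + 2) mod 3) s" by (simp add: alpha_def)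
  also have "\<dots> = K (((r + 2) mod 3 + 2 * n) mod 3) s" by (simp add: Suc.IH)
  also have "\<dots> = K ((r + 2 * Suc n) mod 3) s" by (simp add: mod_add_left_eq)
  finally show ?case .
qed simp

lemma beta_pow_apply: "s < 3 \<Longrightarrow> (beta ^^ n) K r s = K r ((s + 2 * n) mod 3)"
proof (induction n arbitrary: s)
  case (Suc n)
  have "(beta ^^ Suc n) K r s = (beta ^^ n) K r ((s + 2) mod 3)" by (simp add: beta_def)
  also have "\<dots> = K r (((s + 2) mod 3 + 2 * n) mod 3)" by (simp add: Suc.IH)
  also have "\<dots> = K r ((s + 2 * Suc n) mod 3)" by (simp add: mod_add_left_eq)
  finally show ?case .
qed simp

lemma keedwell_exps_apply:
  assumes "keedwell_exps B c d" "i < 3" "j < 3" "r < 3" "s < 3"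
  shows "B (3 * i + r) (3 * j + s) = B ((r + 2 * c i j) mod 3) ((s + 2 * d i j) mod 3)"
  using assms by (simp add: keedwell_exps_def alpha_pow_apply beta_pow_apply)

lemma sudoku_inj_on_first_subsquare:
  assumes "sudoku B"
  shows "inj_on (\<lambda>(r, s). B r s) ({..<3} \<times> {..<3})"
proof -
  have "\<forall>a<3. \<forall>b<3. bij_betw (\<lambda>(r, s). B (3 * a + r) (3 * b + s)) ({..<3} \<times> {..<3}) {..<9}"
    using assms unfolding sudoku_def by (elim conjE)
  from this[rule_format, of 0 0] show ?thesis by (simp add: bij_betw_def)
qed

lemma quasi_linear_iff_shifts_aligned:
  assumes "c 0 0 = 0"
  shows "quasi_linear c \<longleftrightarrow>
    (\<forall>i<3. \<forall>l<3. \<forall>r<3. \<exists>t<3. \<forall>j<3. (r + 2 * c i j) mod 3 = (t + 2 * c l j) mod 3)"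
  (is "_ \<longleftrightarrow> ?aligned")
proof
  assume ql: "quasi_linear c"
  show ?aligned
  proof (intro allI impI)
    fix i l r :: nat assume "i < 3" "l < 3" "r < 3"
    have "(r + 2 * c i j) mod 3 = ((r + 2 * c i 0 + c l 0) mod 3 + 2 * c l j) mod 3" if "j < 3" for j
    proof -
      have "c i j mod 3 = (c i 0 + c 0 j) mod 3" "c l j mod 3 = (c l 0 + c 0 j) mod 3"
        using ql \<open>i < 3\<close> \<open>l < 3\<close> that unfolding quasi_linear_def by auto
      then show ?thesis unfolding mod_add_left_eq nat_mod_eq_iff_int_dvd by simp presburger
    qed
    then show "\<exists>t<3. \<forall>j<3. (r + 2 * c i j) mod 3 = (t + 2 * c l j) mod 3" by force
  qed
next
  assume ?aligned
  show "quasi_linear c" unfolding quasi_linear_def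
  proof (intro allI impI)
    fix i j :: nat assume "i < 3" "j < 3"
    then obtain t where "(2 * c i j) mod 3 = (t + 2 * c 0 j) mod 3" "(2 * c i 0) mod 3 = t mod 3"
      using \<open>?aligned\<close> assms by fastforce
    then show "c i j mod 3 = (c i 0 + c 0 j) mod 3"
      unfolding nat_mod_eq_iff_int_dvd by simp presburger
  qed
qed

text \<open>Stated for any board with the Keedwell shift structure so that it also applies to the
  transpose, with the roles of c and d exchanged.\<close>

lemma rows_aligned_iff_quasi_linear:
  assumes inj: "inj_on (\<lambda>(r, s). B r s) ({..<3} \<times> {..<3})" and "c 0 0 = 0"
    and shift: "\<forall>i<3. \<forall>j<3. \<forall>r<3. \<forall>s<3.
      B (3 * i + r) (3 * j + s) = B ((r + 2 * c i j) mod 3) ((s + 2 * d i j) mod 3)"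
  shows "rows_aligned B \<longleftrightarrow> quasi_linear c"
proof -
  have row_of_K: "minirow B i r j = minirow B 0 ((r + 2 * c i j) mod 3) 0"
    if "i < 3" "r < 3" "j < 3" for i r j
  proof -
    have "minirow B i r j =
        (\<lambda>s. B ((r + 2 * c i j) mod 3) s) ` (\<lambda>s. (s + 2 * d i j) mod 3) ` {..<3}"
      unfolding minirow_def image_image using shift that by (intro image_cong) simp_all
    then show ?thesis by (simp add: add_mod_image_lessThan minirow_def)
  qed
  have rows_of_K_distinct: "minirow B 0 x 0 = minirow B 0 y 0 \<longleftrightarrow> x = y"
    if "x < 3" "y < 3" for x y
  proof
    assume "minirow B 0 x 0 = minirow B 0 y 0"
    then have "B x 0 \<in> (\<lambda>s. B y s) ` {..<3}" by (auto simp: minirow_def)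
    then obtain s where "s < 3" "B x 0 = B y s" by auto
    with inj_onD[OF inj, of "(x, 0)" "(y, s)"] that show "x = y" by auto
  qed simp
  have minirows_eq_iff: "minirow B i r j = minirow B l t j \<longleftrightarrow>
      (r + 2 * c i j) mod 3 = (t + 2 * c l j) mod 3"
    if "i < 3" "l < 3" "r < 3" "t < 3" "j < 3" for i l r t j
    using that row_of_K[of i r j] row_of_K[of l t j]
      rows_of_K_distinct[of "(r + 2 * c i j) mod 3" "(t + 2 * c l j) mod 3"]
    by simp
  have "rows_aligned B \<longleftrightarrow>
      (\<forall>i<3. \<forall>l<3. \<forall>r<3. \<exists>t<3. \<forall>j<3. (r + 2 * c i j) mod 3 = (t + 2 * c l j) mod 3)"
    unfolding rows_aligned_def by (simp add: minirows_eq_iff cong: conj_cong)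
  then show ?thesis using quasi_linear_iff_shifts_aligned[of c, OF \<open>c 0 0 = 0\<close>] by simp
qed

lemma quasi_linear_transpose: "quasi_linear (\<lambda>i j. m j i) \<longleftrightarrow> quasi_linear m"
  unfolding quasi_linear_def by (auto simp: add.commute)

lemma linearity_degree_eq_alignment_degree:
  assumes "keedwell B"
  shows "linearity_degree B = alignment_degree B"
proof -
  have inj: "inj_on (\<lambda>(r, s). B r s) ({..<3} \<times> {..<3})"
    using assms sudoku_inj_on_first_subsquare unfolding keedwell_def by blast
  then have inj_transpose: "inj_on (\<lambda>(r, s). board_transpose B r s) ({..<3} \<times> {..<3})"
    unfolding board_transpose_def inj_on_def by auto
  have lin_deg: "lin_deg c d = alignment_degree B" if "keedwell_exps B c d" for c d
  proof -
    have "c 0 0 = 0" "d 0 0 = 0" using that by (simp_all add: keedwell_exps_def)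
    have "rows_aligned B \<longleftrightarrow> quasi_linear c"
      by (rule rows_aligned_iff_quasi_linear[of B c d, OF inj \<open>c 0 0 = 0\<close>])
        (simp add: keedwell_exps_apply[OF that])
    moreover have "rows_aligned (board_transpose B) \<longleftrightarrow> quasi_linear (\<lambda>i j. d j i)"
      by (rule rows_aligned_iff_quasi_linear[of "board_transpose B" "\<lambda>i j. d j i" "\<lambda>i j. c j i", OF inj_transpose])
        (simp_all add: \<open>d 0 0 = 0\<close> board_transpose_def keedwell_exps_apply[OF that])
    ultimately show ?thesis
      using quasi_linear_transpose[of d] unfolding lin_deg_def alignment_degree_def by simp
  qed
  obtain c d where "keedwell_exps B c d" using assms unfolding keedwell_def by blast
  show ?thesis unfolding linearity_degree_def
  proof (rule the_equality)
    show "\<exists>c d. keedwell_exps B c d \<and> alignment_degree B = lin_deg c d"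
      using \<open>keedwell_exps B c d\<close> lin_deg by metis
  qed (use lin_deg in blast)
qed

theorem lemma3p6:
  assumes "keedwell B" and "g \<in> Gk"
  shows "keedwell (act g B) \<and> linearity_degree (act g B) = linearity_degree B"
proof -
  have "g \<in> G9" and keedwell_gB: "keedwell (act g B)" using assms unfolding Gk_def by auto
  have "linearity_degree (act g B) = alignment_degree (act g B)"
    by (rule linearity_degree_eq_alignment_degree[OF keedwell_gB])
  also have "\<dots> = alignment_degree B" by (rule alignment_degree_act[OF \<open>g \<in> G9\<close>])
  also have "\<dots> = linearity_degree B"
    by (rule linearity_degree_eq_alignment_degree[OF assms(1), symmetric])
  finally show ?thesis using keedwell_gB by simp
qed

end
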